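(* There exist continuous functions $f_1,f_2,f_3,f_4:\mathrm{SO}(3)\to\mathbb{R}^3$ such that for every rotation $R\in\mathrm{SO}(3)$, at least one of $\mathbf{R}_{xyz}(f_1(R))$, $\mathbf{R}_{xyz}(f_2(R))$, $\mathbf{R}_{xzy}(f_3(R))$, $\mathbf{R}_{xzy}(f_4(R))$ is equal to $R$.
   Context: Unit quaternions $w+x\mathbf{i}+y\mathbf{j}+z\mathbf{k}$ are identified with $(w,x,y,z)\in S^3$, and $\mathbf{R}_Q:S^3\to\mathrm{SO}(3)$ is $$\mathbf{R}_Q(w,x,y,z)=\begin{bmatrix}1-2y^2-2z^2 & 2(xy-zw) & 2(xz+yw)\\ 2(xy+zw) & 1-2x^2-2z^2 & 2(yz-xw)\\ 2(xz-yw) & 2(yz+xw) & 1-2x^2-2y^2\end{bmatrix}.$$ $\mathbf{R}_{xyz}(\alpha,\beta,\gamma)=\mathbf{R}_Q\big((\cos\frac{\gamma}{2}+\mathbf{k}\sin\frac{\gamma}{2})(\cos\frac{\beta}{2}+\mathbf{j}\sin\frac{\beta}{2})(\cos\frac{\alpha}{2}+\mathbf{i}\sin\frac{\alpha}{2})\big)$ and $\mathbf{R}_{xzy}(\alpha,\beta,\gamma)=\mathbf{R}_Q\big((\cos\frac{\gamma}{2}+\mathbf{j}\sin\frac{\gamma}{2})(\cos\frac{\beta}{2}+\mathbf{k}\sin\frac{\beta}{2})(\cos\frac{\alpha}{2}+\mathbf{i}\sin\frac{\alpha}{2})\big)$ (quaternion products) are the rotations given by extrinsic $x$-$y$-$z$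 and $x$-$z$-$y$ Euler angles respectively. *)

theory Defs
  imports "HOL-Analysis.Analysis"
begin

text \<open>Quaternions w + x i + y j + z k represented as 4-tuples (w,x,y,z) of reals.\<close>
type_synonym quat = "real \<times> real \<times> real \<times> real"

fun qmult :: "quat \<Rightarrow> quat \<Rightarrow> quat" where
  "qmult (a1, b1, c1, d1) (a2, b2, c2, d2) =
     (a1*a2 - b1*b2 - c1*c2 - d1*d2,
      a1*b2 + b1*a2 + c1*d2 - d1*c2,
      a1*c2 - b1*d2 + c1*a2 + d1*b2,
      a1*d2 + b1*c2 - c1*b2 + d1*a2)"

definition RQ :: "quat \<Rightarrow> real^3^3" where
  "RQ q = (case q of (w, x, y, z) \<Rightarrow>
     vector [vector [1 - 2*y^2 - 2*z^2, 2*(x*y - z*w), 2*(x*z + y*w)],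
             vector [2*(x*y + z*w), 1 - 2*x^2 - 2*z^2, 2*(y*z - x*w)],
             vector [2*(x*z - y*w), 2*(y*z + x*w), 1 - 2*x^2 - 2*y^2]])"

definition qi :: "real \<Rightarrow> quat" where "qi t = (cos (t/2), sin (t/2), 0, 0)"
definition qj :: "real \<Rightarrow> quat" where "qj t = (cos (t/2), 0, sin (t/2), 0)"
definition qk :: "real \<Rightarrow> quat" where "qk t = (cos (t/2), 0, 0, sin (t/2))"

text \<open>Euler angle rotations; the argument vector is (alpha, beta, gamma).\<close>
definition Rxyz :: "real^3 \<Rightarrow> real^3^3" where
  "Rxyz v = RQ (qmult (qmult (qk (v$3)) (qj (v$2))) (qi (v$1)))"

definition Rxzy :: "real^3 \<Rightarrow> real^3^3" where
  "Rxzy v = RQ (qmult (qmult (qj (v$3)) (qk (v$2))) (qi (v$1)))"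

definition SO3 :: "(real^3^3) set" where
  "SO3 = {R. orthogonal_matrix R \<and> det R = 1}"

end

theory Submission
  imports Defs
begin

text \<open>Away from gimbal lock (\<open>R\<^sub>3\<^sub>1 = \<plusminus>1\<close>), the extrinsic x-y-z Euler angles of a rotation \<open>R\<close>
  are \<open>\<beta> = -arcsin R\<^sub>3\<^sub>1\<close>, \<open>\<alpha> = arg (R\<^sub>3\<^sub>3 + i R\<^sub>3\<^sub>2)\<close> and \<open>\<gamma> = arg (R\<^sub>1\<^sub>1 + i R\<^sub>2\<^sub>1)\<close>;
  similarly for x-z-y, whose gimbal lock is \<open>R\<^sub>2\<^sub>1 = \<plusminus>1\<close>. Such a formula is continuous
  wherever the two complex numbers avoid the branch cut of the chosen argument function, and
  two branches are available, with cuts along the negative and the positive real axis.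
  Correctness rests on the fact that a rotation is determined by its first column together
  with one further row, unless that row is \<open>\<plusminus>e\<^sub>1\<close>.
  Near the gimbal lock of x-y-z we have \<open>R\<^sub>2\<^sub>1 \<approx> 0\<close>, and an elementary case analysis shows
  that \<open>SO(3)\<close> is covered by closed regions on which one of four such formulas (one of them
  defined piecewise on two disjoint closed sets) is continuous and correct. By the Tietze
  extension theorem each formula extends continuously from its region to all of \<open>SO(3)\<close>.\<close>

unbundle cross3_syntax

lemma orthogonal_matrix_inner:
  fixes C :: "real^'n^'n"
  assumes "orthogonal_matrix C"
  shows "(C *v u) \<bullet> (C *v v) = u \<bullet> v"
  using assms orthogonal_transformation_matrix[of "(*v) C"]
  by (simp add: orthogonal_transformation_def matrix_vector_mul_linear)

lemma orthogonal_matrix_unit_row_column: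
  fixes R :: "real^3^3"
  assumes "orthogonal_matrix R"
  shows "(R$i$1)\<^sup>2 + (R$i$2)\<^sup>2 + (R$i$3)\<^sup>2 = 1" "(R$1$j)\<^sup>2 + (R$2$j)\<^sup>2 + (R$3$j)\<^sup>2 = 1"
  using assms[unfolded orthogonal_matrix_orthonormal_rows]
    assms[unfolded orthogonal_matrix_orthonormal_columns]
  by (simp_all add: norm_eq_1 inner_vec_def sum_3 row_def column_def power2_eq_square)

lemma orthogonal_matrix_entry_bound:
  fixes R :: "real^'n^'n"
  assumes "orthogonal_matrix R"
  shows "\<bar>R$i$j\<bar> \<le> 1"
  using component_le_norm_cart[of "row i R" j] assms
  by (simp add: orthogonal_matrix_orthonormal_rows row_def)

lemma rotation_matrix_column_cross:
  fixes R :: "real^3^3"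
  assumes "rotation_matrix R"
  shows "column 1 R \<times> column 2 R = column 3 R" "column 2 R \<times> column 3 R = column 1 R"
  using cross_rotation_matrix[OF assms, of "axis 1 1" "axis 2 1"]
    cross_rotation_matrix[OF assms, of "axis 2 1" "axis 3 1"]
  by (simp_all add: cross_basis matrix_vector_mult_basis)

lemma rotation_matrix_fixing_two_vectors_eq_mat_1:
  fixes C :: "real^3^3"
  assumes C: "rotation_matrix C" and "C *v x = x" "C *v y = y" and xy: "x \<times> y \<noteq> 0"
  shows "C = mat 1"
proof -
  have fixes_xy: "C *v (x \<times> y) = x \<times> y"
    using cross_rotation_matrix[OF C, of x y] assms by simp
  have "C *v z = z" for z
  proof -
    define w where "w = C *v z - z"
    have "w \<bullet> u = 0" if "C *v u = u" for u
      using orthogonal_matrix_inner[of C z u] C that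
      by (simp add: w_def inner_diff_left rotation_matrix_def)
    then have "w \<bullet> x = 0" "w \<bullet> y = 0" "w \<bullet> (x \<times> y) = 0"
      using assms fixes_xy by blast+
    then have "w \<times> (x \<times> y) = 0"
      by (simp add: Lagrange)
    then have "(norm w * norm (x \<times> y))\<^sup>2 = 0"
      using norm_cross_dot[of w "x \<times> y"] \<open>w \<bullet> (x \<times> y) = 0\<close> by simp
    then have "w = 0" using xy by simp
    then show ?thesis by (simp add: w_def)
  qed
  then show ?thesis by (simp add: matrix_eq)
qed

lemma rotation_matrix_eq_by_column_row:
  fixes A B :: "real^3^3"
  assumes A: "rotation_matrix A" and B: "rotation_matrix B"
    and col: "column j A = column j B" and row: "row k A = row k B"
    and not_axis: "(A$k$j)\<^sup>2 \<noteq> 1"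
  shows "A = B"
proof -
  have orth: "transpose A ** A = mat 1" "A ** transpose A = mat 1" "B ** transpose B = mat 1"
    using A B by (simp_all add: rotation_matrix_def orthogonal_matrix_def)
  define C where "C = transpose A ** B"
  have "rotation_matrix C"
    using A B by (simp add: C_def rotation_matrix_def orthogonal_matrix_mul det_mul det_transpose)
  moreover have "C *v axis j 1 = axis j 1"
  proof -
    have "C *v axis j 1 = transpose A *v column j B"
      by (metis C_def matrix_vector_mul_assoc matrix_vector_mult_basis)
    also have "\<dots> = (transpose A ** A) *v axis j 1"
      by (metis col matrix_vector_mul_assoc matrix_vector_mult_basis)
    finally show ?thesis by (simp add: orth(1))
  qed
  moreover have "C *v row k A = row k A"
  proof -
    have rows: "row k X = transpose X *v axis k 1" for X :: "real^3^3"
      by (simp only: matrix_vector_mult_basis column_transpose)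
    have "C *v row k A = C *v (transpose B *v axis k 1)"
      unfolding row rows[of B] ..
    also have "\<dots> = transpose A *v ((B ** transpose B) *v axis k 1)"
      by (simp only: C_def matrix_vector_mul_assoc matrix_mul_assoc)
    finally show ?thesis
      by (simp only: orth(3) matrix_vector_mul_lid rows[of A])
  qed
  moreover have "axis j 1 \<times> row k A \<noteq> 0"
  proof -
    have "norm (row k A) = 1"
      using A by (simp add: rotation_matrix_def orthogonal_matrix_orthonormal_rows)
    moreover have "axis j 1 \<bullet> row k A = A$k$j"
      by (simp add: inner_axis' row_def)
    ultimately have "(norm (axis j 1 \<times> row k A))\<^sup>2 = 1 - (A$k$j)\<^sup>2"
      using norm_cross_dot[of "axis j 1" "row k A"] by simp
    then show ?thesis
      using not_axis by auto
  qed
  ultimately have "C = mat 1" by (rule rotation_matrix_fixing_two_vectors_eq_mat_1)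
  then have "A ** C = A"
    by (simp add: matrix_mul_rid)
  then show ?thesis
    by (simp add: C_def matrix_mul_assoc orth(2) matrix_mul_lid)
qed

lemma mem_SO3_iff: "R \<in> SO3 \<longleftrightarrow> rotation_matrix R"
  by (simp add: SO3_def rotation_matrix_def)

definition quat_sqnorm :: "quat \<Rightarrow> real" where
  "quat_sqnorm q = (case q of (w, x, y, z) \<Rightarrow> w^2 + x^2 + y^2 + z^2)"

lemma quat_sqnorm_qmult: "quat_sqnorm (qmult p q) = quat_sqnorm p * quat_sqnorm q"
  by (cases p rule: prod_cases4; cases q rule: prod_cases4)
     (simp add: quat_sqnorm_def power2_eq_square algebra_simps)

lemma quat_sqnorm_axis_rotations [simp]:
  "quat_sqnorm (qi t) = 1" "quat_sqnorm (qj t) = 1" "quat_sqnorm (qk t) = 1"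
  by (simp_all add: quat_sqnorm_def qi_def qj_def qk_def)

lemma RQ_nth: "RQ (w,x,y,z) $ i $ j =
  (if i = 1 then (if j = 1 then 1 - 2*y^2 - 2*z^2 else if j = 2 then 2*(x*y - z*w) else 2*(x*z + y*w))
   else if i = 2 then (if j = 1 then 2*(x*y + z*w) else if j = 2 then 1 - 2*x^2 - 2*z^2 else 2*(y*z - x*w))
   else (if j = 1 then 2*(x*z - y*w) else if j = 2 then 2*(y*z + x*w) else 1 - 2*x^2 - 2*y^2))"
  using exhaust_3[of i] exhaust_3[of j] by (auto simp: RQ_def)

lemma rotation_matrix_RQ:
  assumes "quat_sqnorm q = 1"
  shows "rotation_matrix (RQ q)"
proof (cases q)
  case (fields w x y z)
  with assms have unit: "w^2 + x^2 + y^2 + z^2 = 1" by (simp add: quat_sqnorm_def)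
  have "orthogonal_matrix (RQ q)"
    unfolding orthogonal_matrix fields
    by (simp add: vec_eq_iff forall_3 matrix_matrix_mult_def transpose_def mat_def sum_3 RQ_nth)
       (use unit in algebra)
  moreover have "det (RQ q) = 1"
    unfolding fields by (simp add: det_3 RQ_nth) (use unit in algebra)
  ultimately show ?thesis by (simp add: rotation_matrix_def)
qed

lemma rotation_matrix_Rxyz: "rotation_matrix (Rxyz v)"
  and rotation_matrix_Rxzy: "rotation_matrix (Rxzy v)"
  by (simp_all add: Rxyz_def Rxzy_def rotation_matrix_RQ quat_sqnorm_qmult)

lemma half_angle:
  fixes t :: real
  shows "cos t = 1 - 2 * sin (t/2)^2" "sin t = 2 * sin (t/2) * cos (t/2)"
  using cos_double_sin[of "t/2"] sin_double[of "t/2"] by simp_all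

lemma Rxyz_column_row:
  "column 1 (Rxyz v) = vector [cos (v$3) * cos (v$2), sin (v$3) * cos (v$2), - sin (v$2)]"
  "row 3 (Rxyz v) = vector [- sin (v$2), cos (v$2) * sin (v$1), cos (v$2) * cos (v$1)]"
  unfolding column_def row_def vec_eq_iff forall_3 Rxyz_def qi_def qj_def qk_def
  using half_angle[of "v$1"] half_angle[of "v$2"] half_angle[of "v$3"]
    sin_cos_squared_add[of "v$1/2"] sin_cos_squared_add[of "v$2/2"] sin_cos_squared_add[of "v$3/2"]
  by (simp_all add: RQ_nth; algebra)+

lemma Rxzy_column_row:
  "column 1 (Rxzy v) = vector [cos (v$3) * cos (v$2), sin (v$2), - sin (v$3) * cos (v$2)]"
  "row 2 (Rxzy v) = vector [sin (v$2), cos (v$2) * cos (v$1), - cos (v$2) * sin (v$1)]"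
  unfolding column_def row_def vec_eq_iff forall_3 Rxzy_def qi_def qj_def qk_def
  using half_angle[of "v$1"] half_angle[of "v$2"] half_angle[of "v$3"]
    sin_cos_squared_add[of "v$1/2"] sin_cos_squared_add[of "v$2/2"] sin_cos_squared_add[of "v$3/2"]
  by (simp_all add: RQ_nth; algebra)+

lemma is_Arg_Re_Im:
  assumes "is_Arg z r"
  shows "Re z = cmod z * cos r" "Im z = cmod z * sin r"
  using arg_cong[OF assms[unfolded is_Arg_def], of Re] arg_cong[OF assms[unfolded is_Arg_def], of Im]
  by (simp_all add: Re_exp Im_exp)

lemma is_Arg_Arg_Arg2pi: "is_Arg z (Arg z)" "is_Arg z (Arg2pi z)"
  using is_Arg_Arg[of z] Arg2pi[of z] by (cases "z = 0"; simp add: is_Arg_def)+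

lemma continuous_on_Arg2pi: "continuous_on (- \<real>\<^sub>\<ge>\<^sub>0) Arg2pi"
  by (rule continuous_at_imp_continuous_on) (use continuous_at_Arg2pi in auto)

definition xyz_angles :: "(complex \<Rightarrow> real) \<Rightarrow> (complex \<Rightarrow> real) \<Rightarrow> real^3^3 \<Rightarrow> real^3" where
  "xyz_angles \<theta> \<phi> R =
     vector [\<theta> (Complex (R$3$3) (R$3$2)), - arcsin (R$3$1), \<phi> (Complex (R$1$1) (R$2$1))]"

definition xzy_angles :: "(complex \<Rightarrow> real) \<Rightarrow> (complex \<Rightarrow> real) \<Rightarrow> real^3^3 \<Rightarrow> real^3" where
  "xzy_angles \<theta> \<phi> R =
     vector [\<theta> (Complex (R$2$2) (- R$2$3)), arcsin (R$2$1), \<phi> (Complex (R$1$1) (- R$3$1))]"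

lemma Rxyz_xyz_angles:
  fixes R :: "real^3^3"
  assumes R: "rotation_matrix R" and not_lock: "(R$3$1)\<^sup>2 \<noteq> 1"
    and \<theta>: "\<And>z. is_Arg z (\<theta> z)" and \<phi>: "\<And>z. is_Arg z (\<phi> z)"
  shows "Rxyz (xyz_angles \<theta> \<phi> R) = R"
proof -
  define b where "b = - arcsin (R$3$1)"
  have unit: "(R$1$1)\<^sup>2 + (R$2$1)\<^sup>2 + (R$3$1)\<^sup>2 = 1" "(R$3$1)\<^sup>2 + (R$3$2)\<^sup>2 + (R$3$3)\<^sup>2 = 1"
    using R by (simp_all add: rotation_matrix_def orthogonal_matrix_unit_row_column)
  have "\<bar>R$3$1\<bar> \<le> 1"
    using R by (simp add: rotation_matrix_def orthogonal_matrix_entry_bound)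
  then have b: "cos b = sqrt (1 - (R$3$1)\<^sup>2)" "sin b = - R$3$1"
    by (simp_all add: b_def cos_arcsin)
  have "cmod (Complex (R$3$3) (R$3$2)) = cos b" "cmod (Complex (R$1$1) (R$2$1)) = cos b"
    using unit by (simp_all add: b complex_norm algebra_simps)
  then have polar: "R$3$3 = cos b * cos (\<theta> (Complex (R$3$3) (R$3$2)))"
    "R$3$2 = cos b * sin (\<theta> (Complex (R$3$3) (R$3$2)))"
    "R$1$1 = cos b * cos (\<phi> (Complex (R$1$1) (R$2$1)))"
    "R$2$1 = cos b * sin (\<phi> (Complex (R$1$1) (R$2$1)))"
    using is_Arg_Re_Im[OF \<theta>[of "Complex (R$3$3) (R$3$2)"]]
      is_Arg_Re_Im[OF \<phi>[of "Complex (R$1$1) (R$2$1)"]] by simp_all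
  show ?thesis
  proof (rule rotation_matrix_eq_by_column_row[OF rotation_matrix_Rxyz R])
    show "column 1 (Rxyz (xyz_angles \<theta> \<phi> R)) = column 1 R"
      "row 3 (Rxyz (xyz_angles \<theta> \<phi> R)) = row 3 R"
      unfolding Rxyz_column_row using polar b(2)
      by (simp_all add: xyz_angles_def b_def[symmetric] vec_eq_iff forall_3 column_def row_def
          mult.commute)
    have "Rxyz (xyz_angles \<theta> \<phi> R) $ 3 $ 1 = row 3 (Rxyz (xyz_angles \<theta> \<phi> R)) $ 1"
      by (simp add: row_def)
    then show "(Rxyz (xyz_angles \<theta> \<phi> R) $ 3 $ 1)\<^sup>2 \<noteq> 1"
      using not_lock by (simp add: Rxyz_column_row xyz_angles_def b_def[symmetric] b)
  qed
qed

lemma Rxzy_xzy_angles: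
  fixes R :: "real^3^3"
  assumes R: "rotation_matrix R" and not_lock: "(R$2$1)\<^sup>2 \<noteq> 1"
    and \<theta>: "\<And>z. is_Arg z (\<theta> z)" and \<phi>: "\<And>z. is_Arg z (\<phi> z)"
  shows "Rxzy (xzy_angles \<theta> \<phi> R) = R"
proof -
  define b where "b = arcsin (R$2$1)"
  have unit: "(R$1$1)\<^sup>2 + (R$2$1)\<^sup>2 + (R$3$1)\<^sup>2 = 1" "(R$2$1)\<^sup>2 + (R$2$2)\<^sup>2 + (R$2$3)\<^sup>2 = 1"
    using R by (simp_all add: rotation_matrix_def orthogonal_matrix_unit_row_column)
  have "\<bar>R$2$1\<bar> \<le> 1"
    using R by (simp add: rotation_matrix_def orthogonal_matrix_entry_bound)
  then have b: "cos b = sqrt (1 - (R$2$1)\<^sup>2)" "sin b = R$2$1"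
    by (simp_all add: b_def cos_arcsin)
  have "cmod (Complex (R$2$2) (- R$2$3)) = cos b" "cmod (Complex (R$1$1) (- R$3$1)) = cos b"
    using unit by (simp_all add: b complex_norm algebra_simps)
  then have polar: "R$2$2 = cos b * cos (\<theta> (Complex (R$2$2) (- R$2$3)))"
    "- R$2$3 = cos b * sin (\<theta> (Complex (R$2$2) (- R$2$3)))"
    "R$1$1 = cos b * cos (\<phi> (Complex (R$1$1) (- R$3$1)))"
    "- R$3$1 = cos b * sin (\<phi> (Complex (R$1$1) (- R$3$1)))"
    using is_Arg_Re_Im[OF \<theta>[of "Complex (R$2$2) (- R$2$3)"]]
      is_Arg_Re_Im[OF \<phi>[of "Complex (R$1$1) (- R$3$1)"]] by simp_all
  show ?thesis
  proof (rule rotation_matrix_eq_by_column_row[OF rotation_matrix_Rxzy R])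
    show "column 1 (Rxzy (xzy_angles \<theta> \<phi> R)) = column 1 R"
      "row 2 (Rxzy (xzy_angles \<theta> \<phi> R)) = row 2 R"
      unfolding Rxzy_column_row using polar b(2)
      by (simp_all add: xzy_angles_def b_def[symmetric] vec_eq_iff forall_3 column_def row_def
          mult.commute minus_equation_iff[of "R$3$1"] minus_equation_iff[of "R$2$3"])
    have "Rxzy (xzy_angles \<theta> \<phi> R) $ 2 $ 1 = row 2 (Rxzy (xzy_angles \<theta> \<phi> R)) $ 1"
      by (simp add: row_def)
    then show "(Rxzy (xzy_angles \<theta> \<phi> R) $ 2 $ 1)\<^sup>2 \<noteq> 1"
      using not_lock by (simp add: Rxzy_column_row xzy_angles_def b_def[symmetric] b)
  qed
qed

lemma continuous_on_vector3:
  assumes "continuous_on S f" "continuous_on S g" "continuous_on S h"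
  shows "continuous_on S (\<lambda>x. vector [f x, g x, h x] :: real^3)"
proof -
  have "(\<lambda>x. vector [f x, g x, h x] :: real^3) =
        (\<lambda>x. f x *\<^sub>R axis 1 1 + g x *\<^sub>R axis 2 1 + h x *\<^sub>R axis 3 1)"
    by (rule ext) (simp add: vec_eq_iff forall_3 axis_def)
  then show ?thesis
    by (simp only:) (intro continuous_intros assms)
qed

lemma continuous_on_xyz_angles:
  assumes "continuous_on A \<theta>" "continuous_on B \<phi>"
    and "\<And>R. R \<in> S \<Longrightarrow>
      Complex (R$3$3) (R$3$2) \<in> A \<and> Complex (R$1$1) (R$2$1) \<in> B \<and> \<bar>R$3$1\<bar> \<le> 1"
  shows "continuous_on S (xyz_angles \<theta> \<phi>)"
  unfolding xyz_angles_def
  by (intro continuous_on_vector3 continuous_on_compose2[OF assms(1)]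
      continuous_on_compose2[OF assms(2)] continuous_intros)
     (auto dest!: assms(3) simp: abs_le_iff)

lemma continuous_on_xzy_angles:
  assumes "continuous_on A \<theta>" "continuous_on B \<phi>"
    and "\<And>R. R \<in> S \<Longrightarrow>
      Complex (R$2$2) (- R$2$3) \<in> A \<and> Complex (R$1$1) (- R$3$1) \<in> B \<and> \<bar>R$2$1\<bar> \<le> 1"
  shows "continuous_on S (xzy_angles \<theta> \<phi>)"
  unfolding xzy_angles_def
  by (intro continuous_on_vector3 continuous_on_compose2[OF assms(1)]
      continuous_on_compose2[OF assms(2)] continuous_intros)
     (auto dest!: assms(3) simp: abs_le_iff)

lemma abs_less_iff_power2_less:
  fixes x c :: real
  assumes "0 \<le> c"
  shows "\<bar>x\<bar> < c \<longleftrightarrow> x\<^sup>2 < c\<^sup>2"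
  by (metis abs_le_square_iff abs_of_nonneg assms not_le)

lemma equal_norms_near_opposite_half_axes:
  fixes a b c d :: real
  assumes norms: "a\<^sup>2 + b\<^sup>2 = c\<^sup>2 + d\<^sup>2"
    and "\<not> ((1/20 \<le> a \<or> 1/20 \<le> \<bar>b\<bar>) \<and> (1/20 \<le> c \<or> 1/20 \<le> \<bar>d\<bar>))"
    and "\<not> ((a \<le> -1/20 \<or> 1/20 \<le> \<bar>b\<bar>) \<and> (c \<le> -1/20 \<or> 1/20 \<le> \<bar>d\<bar>))"
  shows "\<bar>b\<bar> < 1/10 \<and> \<bar>d\<bar> < 1/10 \<and> ((a < 1/10 \<and> -1/10 < c) \<or> (-1/10 < a \<and> c < 1/10))"
proof -
  have small: "\<bar>x\<bar> < 1/10 \<and> \<bar>y\<bar> < 1/10"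
    if "\<bar>u\<bar> < 1/20" "\<bar>v\<bar> < 1/20" "u\<^sup>2 + v\<^sup>2 = x\<^sup>2 + y\<^sup>2" for u v x y :: real
  proof -
    have "u\<^sup>2 < 1/400" "v\<^sup>2 < 1/400"
      using that(1,2) abs_less_iff_power2_less[of "1/20"] by (simp_all add: power_divide)
    then have "x\<^sup>2 < 1/100" "y\<^sup>2 < 1/100"
      using that(3) zero_le_power2[of x] zero_le_power2[of y] by linarith+
    then show ?thesis
      using abs_less_iff_power2_less[of "1/10"] by (simp add: power_divide)
  qed
  show ?thesis
    using assms(2,3) small[of a b c d] small[of c d a b] norms by (auto simp: not_le)
qed

lemma rotation_matrix_R22_le_if_R11_le:
  fixes R :: "real^3^3"
  assumes R: "rotation_matrix R"
    and "R$1$1 \<le> -1/2" "\<bar>R$3$2\<bar> < 1/10" "-1/10 < R$3$3"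
  shows "R$2$2 \<le> -1/4"
proof (rule ccontr)
  assume "\<not> R$2$2 \<le> -1/4"
  have bound: "\<bar>R$i$j\<bar> \<le> 1" for i j
    using R by (simp add: rotation_matrix_def orthogonal_matrix_entry_bound)
  have "R$1$1 = R$2$2 * R$3$3 - R$2$3 * R$3$2"
    using arg_cong[OF rotation_matrix_column_cross(2)[OF R], of "\<lambda>v. v$1"]
    by (simp add: cross_components column_def)
  moreover have "\<bar>R$2$3 * R$3$2\<bar> \<le> 1/10"
    using assms(3) bound[of 2 3] mult_mono[of "\<bar>R$2$3\<bar>" 1 "\<bar>R$3$2\<bar>" "1/10"]
    by (simp add: abs_mult)
  ultimately have neg: "R$2$2 * R$3$3 \<le> -2/5"
    using assms(2) by linarith
  show False
  proof (cases "0 \<le> R$3$3")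
    case True
    then have "-1/4 * R$3$3 \<le> R$2$2 * R$3$3"
      using \<open>\<not> R$2$2 \<le> -1/4\<close> by (intro mult_right_mono) auto
    then show False using neg bound[of 3 3] by linarith
  next
    case False
    then have "\<bar>R$2$2 * R$3$3\<bar> \<le> 1/10"
      using assms(4) bound[of 2 2] mult_mono[of "\<bar>R$2$2\<bar>" 1 "\<bar>R$3$3\<bar>" "1/10"]
      by (simp add: abs_mult)
    then show False using neg by linarith
  qed
qed

lemma rotation_matrix_R22_R31_ge:
  fixes R :: "real^3^3"
  assumes R: "rotation_matrix R"
    and "\<bar>R$2$1\<bar> < 1/10" "-1/20 < R$2$2" "\<bar>R$2$3\<bar> < 1/20"
    and opposite: "(R$1$1 < 1/10 \<and> -1/10 < R$3$3) \<or> (-1/10 < R$1$1 \<and> R$3$3 < 1/10)"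
  shows "1/2 \<le> R$2$2 \<and> 1/2 \<le> \<bar>R$3$1\<bar>"
proof -
  have unit: "(R$2$1)\<^sup>2 + (R$2$2)\<^sup>2 + (R$2$3)\<^sup>2 = 1" "(R$1$1)\<^sup>2 + (R$2$1)\<^sup>2 + (R$3$1)\<^sup>2 = 1"
    using R by (simp_all add: rotation_matrix_def orthogonal_matrix_unit_row_column)
  have small: "(R$2$1)\<^sup>2 < 1/100" "(R$2$3)\<^sup>2 < 1/400"
    using assms(2,4) abs_less_iff_power2_less[of "1/10"] abs_less_iff_power2_less[of "1/20"]
    by (simp_all add: power_divide)
  then have "(1/2)\<^sup>2 \<le> (R$2$2)\<^sup>2"
    using unit(1) by (simp add: power_divide)
  then have R22: "1/2 \<le> R$2$2"
    using abs_le_square_iff[of "1/2" "R$2$2"] assms(3) by auto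
  have "R$3$3 = R$1$1 * R$2$2 - R$1$2 * R$2$1"
    using arg_cong[OF rotation_matrix_column_cross(1)[OF R], of "\<lambda>v. v$3"]
    by (simp add: cross_components column_def)
  moreover have "\<bar>R$1$2 * R$2$1\<bar> \<le> 1/10"
    using assms(2) R mult_mono[of "\<bar>R$1$2\<bar>" 1 "\<bar>R$2$1\<bar>" "1/10"]
    by (simp add: abs_mult rotation_matrix_def orthogonal_matrix_entry_bound)
  ultimately have close: "\<bar>R$1$1 * R$2$2 - R$3$3\<bar> \<le> 1/10"
    by simp
  have "\<bar>R$1$1\<bar> < 1/2"
  proof (rule ccontr)
    assume far: "\<not> \<bar>R$1$1\<bar> < 1/2"
    then have "1/4 \<le> \<bar>R$1$1\<bar> * R$2$2"
      using R22 mult_mono[of "1/2" "\<bar>R$1$1\<bar>" "1/2" "R$2$2"] by simp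
    then show False
      using opposite close far by (cases "0 \<le> R$1$1") (auto simp: abs_if)
  qed
  then have "(R$1$1)\<^sup>2 < 1/4"
    using abs_less_iff_power2_less[of "1/2"] by (simp add: power_divide)
  then have "(1/2)\<^sup>2 \<le> (R$3$1)\<^sup>2"
    using unit(2) small(1) by (simp add: power_divide)
  then show ?thesis
    using R22 abs_le_square_iff[of "1/2" "R$3$1"] by simp
qed

text \<open>The regions keep the complex numbers handed to \<^const>\<open>Arg\<close> (resp. \<^const>\<open>Arg2pi\<close>)
  a fixed distance away from the branch cut \<open>]-\<infinity>, 0]\<close> (resp. \<open>[0, \<infinity>[\<close>), so that
  they are closed and the Euler angle formulas are continuous on them.\<close>

definition xyz_Arg_region :: "(real^3^3) set" where
  "xyz_Arg_region =
     {R. (1/20 \<le> R$1$1 \<or> 1/20 \<le> \<bar>R$2$1\<bar>) \<and> (1/20 \<le> R$3$3 \<or> 1/20 \<le> \<bar>R$3$2\<bar>)}"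

definition xyz_Arg2pi_region :: "(real^3^3) set" where
  "xyz_Arg2pi_region =
     {R. (R$1$1 \<le> -1/20 \<or> 1/20 \<le> \<bar>R$2$1\<bar>) \<and> (R$3$3 \<le> -1/20 \<or> 1/20 \<le> \<bar>R$3$2\<bar>)}"

definition xzy_mixed_region :: "(real^3^3) set" where
  "xzy_mixed_region =
     {R. \<bar>R$2$1\<bar> \<le> 1/2 \<and> -1/2 \<le> R$1$1 \<and> (R$2$2 \<le> -1/20 \<or> 1/20 \<le> \<bar>R$2$3\<bar>)}"

definition xzy_Arg_region :: "(real^3^3) set" where
  "xzy_Arg_region = {R. \<bar>R$2$1\<bar> \<le> 1/2 \<and> 1/2 \<le> R$2$2 \<and> 1/2 \<le> \<bar>R$3$1\<bar>}"

definition xzy_Arg2pi_region :: "(real^3^3) set" where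
  "xzy_Arg2pi_region = {R. \<bar>R$2$1\<bar> \<le> 1/2 \<and> R$2$2 \<le> -1/4 \<and> R$1$1 \<le> -1/2}"

lemma closed_regions:
  "closed xyz_Arg_region" "closed xyz_Arg2pi_region" "closed xzy_mixed_region"
  "closed xzy_Arg_region" "closed xzy_Arg2pi_region"
  unfolding xyz_Arg_region_def xyz_Arg2pi_region_def xzy_mixed_region_def
    xzy_Arg_region_def xzy_Arg2pi_region_def
  by (intro closed_Collect_conj closed_Collect_disj closed_Collect_le continuous_intros)+

lemma SO3_covered_by_regions:
  assumes "R \<in> SO3"
  shows "R \<in> xyz_Arg_region \<union> xyz_Arg2pi_region \<union> xzy_mixed_region \<union>
             (xzy_Arg_region \<union> xzy_Arg2pi_region)"
proof -
  have R: "rotation_matrix R"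
    using assms by (simp add: mem_SO3_iff)
  have norms: "(R$1$1)\<^sup>2 + (R$2$1)\<^sup>2 = (R$3$3)\<^sup>2 + (R$3$2)\<^sup>2"
    using R[unfolded rotation_matrix_def] orthogonal_matrix_unit_row_column(1)[of R 3]
      orthogonal_matrix_unit_row_column(2)[of R 1]
    by simp
  show ?thesis
  proof (cases "R \<in> xyz_Arg_region \<union> xyz_Arg2pi_region")
    case False
    then have near: "\<bar>R$2$1\<bar> < 1/10" "\<bar>R$3$2\<bar> < 1/10"
      "(R$1$1 < 1/10 \<and> -1/10 < R$3$3) \<or> (-1/10 < R$1$1 \<and> R$3$3 < 1/10)"
      using equal_norms_near_opposite_half_axes[OF norms]
      by (simp_all add: xyz_Arg_region_def xyz_Arg2pi_region_def)
    consider "R$1$1 \<le> -1/2" | "R \<in> xzy_mixed_region"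
      | "-1/2 < R$1$1" "R \<notin> xzy_mixed_region"
      by linarith
    then show ?thesis
    proof cases
      case 1
      then have "R$2$2 \<le> -1/4"
        using rotation_matrix_R22_le_if_R11_le[OF R] near by linarith
      with 1 near show ?thesis by (simp add: xzy_Arg2pi_region_def)
    next
      case 3
      then have "-1/20 < R$2$2" "\<bar>R$2$3\<bar> < 1/20"
        using near by (auto simp: xzy_mixed_region_def)
      then show ?thesis
        using rotation_matrix_R22_R31_ge[OF R] near by (simp add: xzy_Arg_region_def)
    qed simp
  qed blast
qed

lemma rotation_matrix_R31_square_eq_1_iff:
  fixes R :: "real^3^3"
  assumes "rotation_matrix R"
  shows "(R$3$1)\<^sup>2 = 1 \<longleftrightarrow> R$1$1 = 0 \<and> R$2$1 = 0"
  using assms[unfolded rotation_matrix_def] orthogonal_matrix_unit_row_column(2)[of R 1]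
  by (auto simp: sum_power2_eq_zero_iff)

lemma rotation_matrix_R11_pos_or_R31_nonzero:
  fixes R :: "real^3^3"
  assumes "rotation_matrix R" "\<bar>R$2$1\<bar> \<le> 1/2" "-1/2 \<le> R$1$1"
  shows "0 < R$1$1 \<or> R$3$1 \<noteq> 0"
proof (rule ccontr)
  assume "\<not> ?thesis"
  then have "(R$1$1)\<^sup>2 \<le> (1/2)\<^sup>2" "(R$2$1)\<^sup>2 \<le> (1/2)\<^sup>2" "R$3$1 = 0"
    using assms(2,3) abs_le_square_iff[of "R$1$1" "1/2"] abs_le_square_iff[of "R$2$1" "1/2"]
    by auto
  then show False
    using assms(1)[unfolded rotation_matrix_def] orthogonal_matrix_unit_row_column(2)[of R 1]
    by (simp add: power_divide)
qed

lemma xyz_Arg_chart: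
  "continuous_on (SO3 \<inter> xyz_Arg_region) (xyz_angles Arg Arg)"
  "R \<in> SO3 \<inter> xyz_Arg_region \<Longrightarrow> Rxyz (xyz_angles Arg Arg R) = R"
  by (auto intro!: continuous_on_xyz_angles[OF continuous_on_Arg continuous_on_Arg]
      Rxyz_xyz_angles is_Arg_Arg_Arg2pi
      simp: complex_nonpos_Reals_iff xyz_Arg_region_def mem_SO3_iff rotation_matrix_def
      orthogonal_matrix_entry_bound rotation_matrix_R31_square_eq_1_iff)

lemma xyz_Arg2pi_chart:
  "continuous_on (SO3 \<inter> xyz_Arg2pi_region) (xyz_angles Arg2pi Arg2pi)"
  "R \<in> SO3 \<inter> xyz_Arg2pi_region \<Longrightarrow> Rxyz (xyz_angles Arg2pi Arg2pi R) = R"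
  by (auto intro!: continuous_on_xyz_angles[OF continuous_on_Arg2pi continuous_on_Arg2pi]
      Rxyz_xyz_angles is_Arg_Arg_Arg2pi
      simp: complex_nonneg_Reals_iff xyz_Arg2pi_region_def mem_SO3_iff rotation_matrix_def
      orthogonal_matrix_entry_bound rotation_matrix_R31_square_eq_1_iff)

lemma xzy_mixed_chart:
  "continuous_on (SO3 \<inter> xzy_mixed_region) (xzy_angles Arg2pi Arg)"
  "R \<in> SO3 \<inter> xzy_mixed_region \<Longrightarrow> Rxzy (xzy_angles Arg2pi Arg R) = R"
proof -
  have "Complex (R$1$1) (- R$3$1) \<notin> \<real>\<^sub>\<le>\<^sub>0" if "R \<in> SO3 \<inter> xzy_mixed_region" for R
    using rotation_matrix_R11_pos_or_R31_nonzero[of R] that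
    by (auto simp: mem_SO3_iff xzy_mixed_region_def complex_nonpos_Reals_iff)
  then show "continuous_on (SO3 \<inter> xzy_mixed_region) (xzy_angles Arg2pi Arg)"
    by (intro continuous_on_xzy_angles[OF continuous_on_Arg2pi continuous_on_Arg])
       (auto simp: complex_nonneg_Reals_iff xzy_mixed_region_def)
  show "R \<in> SO3 \<inter> xzy_mixed_region \<Longrightarrow> Rxzy (xzy_angles Arg2pi Arg R) = R"
    by (auto intro!: Rxzy_xzy_angles is_Arg_Arg_Arg2pi
        simp: xzy_mixed_region_def mem_SO3_iff abs_square_eq_1)
qed

definition xzy_split_angles :: "real^3^3 \<Rightarrow> real^3" where
  "xzy_split_angles R =
     (if 0 \<le> R$2$2 then xzy_angles Arg Arg R else xzy_angles Arg2pi Arg2pi R)"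

lemma xzy_split_chart:
  "continuous_on (SO3 \<inter> (xzy_Arg_region \<union> xzy_Arg2pi_region)) xzy_split_angles"
  "R \<in> SO3 \<inter> (xzy_Arg_region \<union> xzy_Arg2pi_region) \<Longrightarrow> Rxzy (xzy_split_angles R) = R"
proof -
  have "continuous_on xzy_Arg_region (xzy_angles Arg Arg)"
    by (auto intro!: continuous_on_xzy_angles[OF continuous_on_Arg continuous_on_Arg]
        simp: complex_nonpos_Reals_iff xzy_Arg_region_def)
  moreover have "continuous_on xzy_Arg2pi_region (xzy_angles Arg2pi Arg2pi)"
    by (auto intro!: continuous_on_xzy_angles[OF continuous_on_Arg2pi continuous_on_Arg2pi]
        simp: complex_nonneg_Reals_iff xzy_Arg2pi_region_def)
  ultimately have "continuous_on (xzy_Arg_region \<union> xzy_Arg2pi_region) xzy_split_angles"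
    unfolding xzy_split_angles_def
    by (intro continuous_on_cases closed_regions)
       (auto simp: xzy_Arg_region_def xzy_Arg2pi_region_def)
  then show "continuous_on (SO3 \<inter> (xzy_Arg_region \<union> xzy_Arg2pi_region)) xzy_split_angles"
    by (rule continuous_on_subset) auto
  show "R \<in> SO3 \<inter> (xzy_Arg_region \<union> xzy_Arg2pi_region) \<Longrightarrow> Rxzy (xzy_split_angles R) = R"
    by (auto intro!: Rxzy_xzy_angles is_Arg_Arg_Arg2pi
        simp: xzy_split_angles_def xzy_Arg_region_def xzy_Arg2pi_region_def mem_SO3_iff
        abs_square_eq_1)
qed

lemma local_section_extends_to_SO3:
  fixes c :: "real^3^3 \<Rightarrow> real^3" and E :: "real^3 \<Rightarrow> real^3^3"
  assumes "closed U" "continuous_on (SO3 \<inter> U) c" "\<And>R. R \<in> SO3 \<inter> U \<Longrightarrow> E (c R) = R"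
  shows "\<exists>f. continuous_on SO3 f \<and> (\<forall>R \<in> SO3 \<inter> U. E (f R) = R)"
proof -
  have "closedin (top_of_set SO3) (SO3 \<inter> U)"
    using assms(1) by (simp add: closedin_closed_Int)
  then obtain f where "continuous_on SO3 f" "\<And>R. R \<in> SO3 \<inter> U \<Longrightarrow> f R = c R"
    using Tietze_unbounded[OF assms(2)] by blast
  with assms(3) show ?thesis by auto
qed

theorem theorem8:
  shows "\<exists>f1 f2 f3 f4 :: real^3^3 \<Rightarrow> real^3.
           continuous_on SO3 f1 \<and> continuous_on SO3 f2 \<and>
           continuous_on SO3 f3 \<and> continuous_on SO3 f4 \<and>
           (\<forall>R\<in>SO3. Rxyz (f1 R) = R \<or> Rxyz (f2 R) = R \<or>
                      Rxzy (f3 R) = R \<or> Rxzy (f4 R) = R)"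
proof -
  obtain f1 where "continuous_on SO3 f1" "\<forall>R \<in> SO3 \<inter> xyz_Arg_region. Rxyz (f1 R) = R"
    using local_section_extends_to_SO3[OF closed_regions(1) xyz_Arg_chart] by blast
  moreover obtain f2 where
    "continuous_on SO3 f2" "\<forall>R \<in> SO3 \<inter> xyz_Arg2pi_region. Rxyz (f2 R) = R"
    using local_section_extends_to_SO3[OF closed_regions(2) xyz_Arg2pi_chart] by blast
  moreover obtain f3 where
    "continuous_on SO3 f3" "\<forall>R \<in> SO3 \<inter> xzy_mixed_region. Rxzy (f3 R) = R"
    using local_section_extends_to_SO3[OF closed_regions(3) xzy_mixed_chart] by blast
  moreover obtain f4 where "continuous_on SO3 f4"
    "\<forall>R \<in> SO3 \<inter> (xzy_Arg_region \<union> xzy_Arg2pi_region). Rxzy (f4 R) = R"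
    using local_section_extends_to_SO3[OF closed_Un[OF closed_regions(4,5)] xzy_split_chart]
    by blast
  ultimately show ?thesis
    using SO3_covered_by_regions by blast
qed

end
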